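(* Let $\beta\in(\frac{1+\sqrt5}{2},2)$ and let $(\eta_i)$ be the quasi-greedy expansion of $1$. If there exists $k_0\ge1$ such that $\overline{\eta_{k_0+1}\eta_{k_0+2}\cdots}>\eta_1\eta_2\cdots$ in the lexicographic order, then some point of the quasi-greedy orbit of $1$ lies in the open interval $(\beta^{-1},\beta^{-1}(\beta-1)^{-1})$.
   Context: The quasi-greedy expansion $(\eta_i)$ of $1$ equals the greedy $\beta$-expansion of $1$ (generated by $G(x)=\beta x\bmod1$ on $[0,1)$, $G(x)=\beta x-1$ on $[1,(\beta-1)^{-1}]$, digits $\lfloor \beta G^{n-1}(1)\rfloor$) if that is infinite; if the greedy expansion is $a_1\cdots a_n0^\infty$ with $a_n=1$, then $(\eta_i)=(a_1\cdots a_{n-1}(a_n-1))^\infty$. The quasi-greedy orbit of $1$ is $Q^i(1)=\sum_{j\ge1}\eta_{i+j}\beta^{-j}$, $i\ge1$. The bar denotes digitwise reflection $a\mapsto1-a$. *)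

theory Defs
  imports Complex_Main
begin

definition greedy_map :: "real \<Rightarrow> real \<Rightarrow> real" where
  "greedy_map \<beta> x = (if x < 1 then \<beta> * x - of_int \<lfloor>\<beta> * x\<rfloor> else \<beta> * x - 1)"

definition greedy_digit :: "real \<Rightarrow> nat \<Rightarrow> nat" where
  "greedy_digit \<beta> n = nat \<lfloor>\<beta> * (greedy_map \<beta> ^^ (n - 1)) 1\<rfloor>"

definition greedy_infinite :: "real \<Rightarrow> bool" where
  "greedy_infinite \<beta> = (\<forall>m. \<exists>n>m. greedy_digit \<beta> n \<noteq> 0)"

text \<open>Quasi-greedy expansion of 1, indexed from 1 (index 0 is irrelevant).
  If the greedy expansion is a_1...a_n 0^infinity with a_n the last nonzero digit,
  the quasi-greedy expansion is (a_1 ... a_(n-1) (a_n - 1))^infinity.\<close>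
definition quasi_greedy :: "real \<Rightarrow> nat \<Rightarrow> nat" where
  "quasi_greedy \<beta> i =
     (if greedy_infinite \<beta> then greedy_digit \<beta> i
      else (let n = (GREATEST k. greedy_digit \<beta> k \<noteq> 0);
                r = (i - 1) mod n + 1
            in if r = n then greedy_digit \<beta> n - 1 else greedy_digit \<beta> r))"

definition qg_orbit :: "real \<Rightarrow> nat \<Rightarrow> real" where
  "qg_orbit \<beta> i = (\<Sum>j. real (quasi_greedy \<beta> (i + j + 1)) / \<beta> ^ (j + 1))"

definition lex_gt :: "(nat \<Rightarrow> nat) \<Rightarrow> (nat \<Rightarrow> nat) \<Rightarrow> bool" where
  "lex_gt x y = (\<exists>n\<ge>1. (\<forall>j. 1 \<le> j \<and> j < n \<longrightarrow> x j = y j) \<and> x n > y n)"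

end

theory Submission
  imports Defs
begin

text \<open>The quasi-greedy orbit satisfies \<open>\<beta> Q\<^sub>m = \<eta>\<^sub>m\<^sub>+\<^sub>1 + Q\<^sub>m\<^sub>+\<^sub>1\<close>, lies in
  \<open>[0,1]\<close> and starts at \<open>Q\<^sub>0 = 1\<close>: being the unique bounded solution of this expanding
  recursion, it is the greedy orbit of \<open>1\<close>, made periodic in the finite case.
  The reflection \<open>1/(\<beta>-1) - Q\<^sub>m\<close> solves the same recursion with the reflected digits, so the
  lexicographic hypothesis gives \<open>1/(\<beta>-1) - Q\<^sub>k\<^sub>0 > Q\<^sub>0 = 1\<close>.
  Going back from \<open>k\<^sub>0\<close> to the last index \<open>p \<le> k\<^sub>0\<close> with \<open>\<eta>\<^sub>p = 1\<close>, the orbit only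
  shrinks by factors \<open>\<beta>\<close> and stays positive, so \<open>Q\<^sub>p\<^sub>-\<^sub>1 = (1 + Q\<^sub>p)/\<beta>\<close> lies in
  \<open>(1/\<beta>, 1/(\<beta>(\<beta>-1)))\<close>; and \<open>p - 1 \<noteq> 0\<close> because \<open>\<beta>(\<beta>-1) > 1\<close> keeps \<open>Q\<^sub>0 = 1\<close> out of
  that interval.\<close>

abbreviation greedy_orbit :: "real \<Rightarrow> nat \<Rightarrow> real" where
  "greedy_orbit \<beta> m \<equiv> (greedy_map \<beta> ^^ m) 1"

lemma greedy_orbit_bounds:
  assumes "1 < \<beta>" "\<beta> < 2"
  shows "0 \<le> greedy_orbit \<beta> m \<and> greedy_orbit \<beta> m \<le> 1 \<and> (m \<ge> 1 \<longrightarrow> greedy_orbit \<beta> m < 1)"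
proof (induction m)
  case 0
  then show ?case by simp
next
  case (Suc m)
  define x where "x = greedy_orbit \<beta> m"
  have step: "greedy_orbit \<beta> (Suc m) = greedy_map \<beta> x"
    by (simp add: x_def)
  show ?case
  proof (cases "x < 1")
    case True
    have "of_int \<lfloor>\<beta> * x\<rfloor> \<le> \<beta> * x" "\<beta> * x < of_int \<lfloor>\<beta> * x\<rfloor> + 1"
      by (rule of_int_floor_le, rule real_of_int_floor_add_one_gt)
    moreover have "greedy_map \<beta> x = \<beta> * x - of_int \<lfloor>\<beta> * x\<rfloor>"
      using True by (simp add: greedy_map_def)
    ultimately show ?thesis using step by linarith
  next
    case False
    then have "x = 1" using Suc x_def by linarith
    then have "greedy_map \<beta> x = \<beta> - 1" by (simp add: greedy_map_def)
    then show ?thesis using step assms by linarith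
  qed
qed

lemma greedy_digit_le_1:
  assumes "1 < \<beta>" "\<beta> < 2"
  shows "greedy_digit \<beta> k \<le> 1"
proof -
  define x where "x = greedy_orbit \<beta> (k - 1)"
  have "0 \<le> x" "x \<le> 1" using greedy_orbit_bounds[OF assms] x_def by auto
  then have "\<beta> * x \<le> \<beta>" using assms mult_left_mono[of x 1 \<beta>] by simp
  then have "\<beta> * x < 2" using assms by linarith
  then show ?thesis unfolding greedy_digit_def x_def[symmetric] by linarith
qed

lemma greedy_digit_1:
  assumes "1 < \<beta>" "\<beta> < 2"
  shows "greedy_digit \<beta> 1 = 1"
proof -
  have "\<lfloor>\<beta>\<rfloor> = 1" using assms by (simp add: floor_eq_iff)
  then show ?thesis by (simp add: greedy_digit_def)
qed

lemma greedy_orbit_step: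
  assumes "1 < \<beta>" "\<beta> < 2"
  shows "\<beta> * greedy_orbit \<beta> m = greedy_digit \<beta> (Suc m) + greedy_orbit \<beta> (Suc m)"
proof -
  define x where "x = greedy_orbit \<beta> m"
  have x: "0 \<le> x" "x \<le> 1" using greedy_orbit_bounds[OF assms, of m] x_def by auto
  have "0 \<le> \<beta> * x" using x assms by simp
  then have digit: "real (greedy_digit \<beta> (Suc m)) = of_int \<lfloor>\<beta> * x\<rfloor>"
    by (simp add: greedy_digit_def x_def)
  show ?thesis
  proof (cases "x < 1")
    case True
    then show ?thesis using digit by (simp add: greedy_map_def x_def)
  next
    case False
    then have "x = 1" using x by linarith
    moreover have "\<lfloor>\<beta>\<rfloor> = 1" using assms by (simp add: floor_eq_iff)
    ultimately show ?thesis using digit by (simp add: greedy_map_def x_def)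
  qed
qed

lemma greedy_orbit_zero_after_last_digit:
  assumes "1 < \<beta>" "\<beta> < 2" "N \<ge> 1" and zero: "\<And>k. N < k \<Longrightarrow> greedy_digit \<beta> k = 0"
  shows "greedy_orbit \<beta> N = 0"
proof (rule ccontr)
  have power: "greedy_orbit \<beta> (N + j) = \<beta> ^ j * greedy_orbit \<beta> N" for j
  proof (induction j)
    case (Suc j)
    have "greedy_orbit \<beta> (Suc (N + j)) = \<beta> * greedy_orbit \<beta> (N + j)"
      using greedy_orbit_step[OF assms(1,2), of "N + j"] zero[of "Suc (N + j)"] by simp
    then show ?case using Suc by simp
  qed simp
  assume "greedy_orbit \<beta> N \<noteq> 0"
  then have pos: "0 < greedy_orbit \<beta> N" using greedy_orbit_bounds[OF assms(1,2), of N] by simp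
  obtain j where "1 / greedy_orbit \<beta> N < \<beta> ^ j" using real_arch_pow[OF assms(1)] by blast
  then have "1 < \<beta> ^ j * greedy_orbit \<beta> N" using pos by (simp add: field_simps)
  then have "1 < greedy_orbit \<beta> (N + j)" using power[of j] by linarith
  then show False using greedy_orbit_bounds[OF assms(1,2), of "N + j"] by simp
qed

lemma finite_greedy_expansion:
  assumes "1 < \<beta>" "\<beta> < 2" "\<not> greedy_infinite \<beta>"
  obtains N where "N \<ge> 2" "greedy_digit \<beta> N = 1" "greedy_orbit \<beta> N = 0"
    "\<And>i. quasi_greedy \<beta> i =
       (if (i - 1) mod N + 1 = N then 0 else greedy_digit \<beta> ((i - 1) mod N + 1))"
proof
  define d where "d = greedy_digit \<beta>"
  define N where "N = (GREATEST k. d k \<noteq> 0)"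
  obtain M where M: "\<And>k. d k \<noteq> 0 \<Longrightarrow> k \<le> M"
    using assms(3) unfolding greedy_infinite_def d_def by (meson not_le)
  have d1: "d 1 = 1" using greedy_digit_1[OF assms(1,2)] d_def by simp
  have "d N \<noteq> 0" unfolding N_def by (rule GreatestI_nat[of _ 1 M]) (use d1 M in auto)
  then show dN: "greedy_digit \<beta> N = 1" using greedy_digit_le_1[OF assms(1,2), of N] d_def by simp
  have N1: "N \<ge> 1" unfolding N_def by (rule Greatest_le_nat[of _ 1 M]) (use d1 M in auto)
  have "d k = 0" if "N < k" for k
    using Greatest_le_nat[of "\<lambda>k. d k \<noteq> 0" k M] M that unfolding N_def[symmetric] by fastforce
  then show GN: "greedy_orbit \<beta> N = 0"
    using greedy_orbit_zero_after_last_digit[OF assms(1,2) N1] d_def by blast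
  show "N \<ge> 2"
  proof (rule ccontr)
    assume "\<not> N \<ge> 2"
    then have "N = 1" using N1 by simp
    then show False using greedy_orbit_step[OF assms(1,2), of 0] GN dN assms(1) by simp
  qed
  show "quasi_greedy \<beta> i =
      (if (i - 1) mod N + 1 = N then 0 else greedy_digit \<beta> ((i - 1) mod N + 1))" for i
    using assms(3) dN by (simp add: quasi_greedy_def d_def N_def Let_def)
qed

lemma quasi_greedy_le_1:
  assumes "1 < \<beta>" "\<beta> < 2"
  shows "quasi_greedy \<beta> i \<le> 1"
proof (cases "greedy_infinite \<beta>")
  case True
  then show ?thesis using greedy_digit_le_1[OF assms] by (simp add: quasi_greedy_def)
next
  case False
  then obtain N where "\<And>i. quasi_greedy \<beta> i =
      (if (i - 1) mod N + 1 = N then 0 else greedy_digit \<beta> ((i - 1) mod N + 1))"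
    using finite_greedy_expansion[OF assms] by blast
  then show ?thesis using greedy_digit_le_1[OF assms] by simp
qed

lemma quasi_greedy_infinitely_many_nonzero:
  assumes "1 < \<beta>" "\<beta> < 2"
  shows "\<exists>m>M. quasi_greedy \<beta> m \<noteq> 0"
proof (cases "greedy_infinite \<beta>")
  case True
  then show ?thesis by (simp add: quasi_greedy_def greedy_infinite_def)
next
  case False
  then obtain N where N: "N \<ge> 2" "\<And>i. quasi_greedy \<beta> i =
      (if (i - 1) mod N + 1 = N then 0 else greedy_digit \<beta> ((i - 1) mod N + 1))"
    using finite_greedy_expansion[OF assms] by blast
  \<comment> \<open>every index \<open>\<equiv> 1 (mod N)\<close> carries the leading digit \<open>1\<close>\<close>
  have "M \<le> M * N" using N(1) by simp
  then have "M < Suc (Suc M * N)" by (simp add: le_imp_less_Suc trans_le_add2)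
  moreover have "quasi_greedy \<beta> (Suc (Suc M * N)) = 1"
    using N greedy_digit_1[OF assms] by simp
  ultimately show ?thesis by (intro exI[of _ "Suc (Suc M * N)"]) simp
qed

lemma quasi_greedy_has_unit_orbit:
  assumes "1 < \<beta>" "\<beta> < 2"
  obtains g :: "nat \<Rightarrow> real" where "g 0 = 1" "\<And>m. 0 \<le> g m \<and> g m \<le> 1"
    "\<And>m. \<beta> * g m = quasi_greedy \<beta> (Suc m) + g (Suc m)"
proof (cases "greedy_infinite \<beta>")
  case True
  show ?thesis
  proof (rule that[of "greedy_orbit \<beta>"])
    show "\<beta> * greedy_orbit \<beta> m = quasi_greedy \<beta> (Suc m) + greedy_orbit \<beta> (Suc m)" for m
      using True greedy_orbit_step[OF assms] by (simp add: quasi_greedy_def)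
  qed (use greedy_orbit_bounds[OF assms] in auto)
next
  case False
  then obtain N where N: "N \<ge> 2" "greedy_digit \<beta> N = 1" "greedy_orbit \<beta> N = 0"
    "\<And>i. quasi_greedy \<beta> i =
       (if (i - 1) mod N + 1 = N then 0 else greedy_digit \<beta> ((i - 1) mod N + 1))"
    using finite_greedy_expansion[OF assms] by blast
  \<comment> \<open>lowering the digit \<open>a\<^sub>N = 1\<close> to \<open>0\<close> turns \<open>G\<^sup>N(1) = 0\<close> into \<open>1 = G\<^sup>0(1)\<close>\<close>
  show ?thesis
  proof (rule that[of "\<lambda>m. greedy_orbit \<beta> (m mod N)"])
    fix m
    have step: "\<beta> * greedy_orbit \<beta> (m mod N) =
        greedy_digit \<beta> (Suc (m mod N)) + greedy_orbit \<beta> (Suc (m mod N))"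
      by (rule greedy_orbit_step[OF assms])
    show "\<beta> * greedy_orbit \<beta> (m mod N) = quasi_greedy \<beta> (Suc m) + greedy_orbit \<beta> (Suc m mod N)"
      by (cases "Suc (m mod N) = N") (use step N in \<open>simp_all add: mod_Suc\<close>)
  qed (use greedy_orbit_bounds[OF assms] in auto)
qed

lemma qg_orbit_step_and_bounds:
  assumes "1 < \<beta>" and digits: "\<And>i. quasi_greedy \<beta> i \<le> 1"
  shows "\<beta> * qg_orbit \<beta> m = quasi_greedy \<beta> (Suc m) + qg_orbit \<beta> (Suc m)"
    and "0 \<le> qg_orbit \<beta> m" and "qg_orbit \<beta> m \<le> \<beta> / (\<beta> - 1)"
proof -
  define f where "f m j = real (quasi_greedy \<beta> (m + j + 1)) / \<beta> ^ (j + 1)" for m j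
  have Q: "qg_orbit \<beta> m = suminf (f m)" for m unfolding qg_orbit_def f_def ..
  have ratio: "norm (1 / \<beta>) < 1" using assms(1) by simp
  have f_nonneg: "0 \<le> f m j" for m j using assms(1) by (simp add: f_def)
  have f_le: "f m j \<le> (1 / \<beta>) ^ j" for m j
  proof -
    have "f m j \<le> 1 / \<beta> ^ (j + 1)"
      using digits[of "m + j + 1"] assms(1) by (simp add: f_def divide_right_mono)
    also have "\<dots> \<le> 1 / \<beta> ^ j" using assms(1) by (simp add: frac_le)
    finally show ?thesis by (simp add: power_one_over)
  qed
  have summable: "summable (f m)" for m
    by (rule summable_comparison_test'[OF summable_geometric[OF ratio], of 0])
      (use f_nonneg f_le in auto)
  show "0 \<le> qg_orbit \<beta> m" unfolding Q using summable f_nonneg by (simp add: suminf_nonneg)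
  have "suminf (f m) \<le> (\<Sum>j. (1 / \<beta>) ^ j)"
    by (rule suminf_le[OF f_le summable summable_geometric[OF ratio]])
  also have "\<dots> = \<beta> / (\<beta> - 1)"
    using suminf_geometric[OF ratio] assms(1) by (simp add: field_simps)
  finally show "qg_orbit \<beta> m \<le> \<beta> / (\<beta> - 1)" unfolding Q .
  have "(\<Sum>j. f m (Suc j)) = suminf (f m) - f m 0" by (rule suminf_split_head[OF summable])
  moreover have "f m (Suc j) = f (Suc m) j / \<beta>" for j by (simp add: f_def)
  then have "(\<Sum>j. f m (Suc j)) = suminf (f (Suc m)) / \<beta>"
    using suminf_divide[OF summable] by presburger
  ultimately show "\<beta> * qg_orbit \<beta> m = quasi_greedy \<beta> (Suc m) + qg_orbit \<beta> (Suc m)"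
    unfolding Q using assms(1) by (simp add: f_def field_simps)
qed

text \<open>The difference of two solutions grows like \<open>\<beta>\<^sup>m\<close>, so bounded solutions coincide.\<close>

lemma expanding_recursion_bounded_unique:
  fixes x y d :: "nat \<Rightarrow> real"
  assumes "1 < \<beta>"
    and x: "\<And>m. \<beta> * x m = d m + x (Suc m)" and y: "\<And>m. \<beta> * y m = d m + y (Suc m)"
    and bounded: "\<And>m. \<bar>x m - y m\<bar> \<le> C"
  shows "x m = y m"
proof (rule ccontr)
  have growth: "x (m + k) - y (m + k) = \<beta> ^ k * (x m - y m)" for k
  proof (induction k)
    case (Suc k)
    have "x (Suc (m + k)) - y (Suc (m + k)) = \<beta> * (x (m + k) - y (m + k))"
      using x[of "m + k"] y[of "m + k"] by (simp add: right_diff_distrib)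
    then show ?case using Suc by simp
  qed simp
  assume "x m \<noteq> y m"
  then have pos: "0 < \<bar>x m - y m\<bar>" by simp
  obtain k where "C / \<bar>x m - y m\<bar> < \<beta> ^ k" using real_arch_pow[OF assms(1)] by blast
  then have "C < \<beta> ^ k * \<bar>x m - y m\<bar>" using pos by (simp add: field_simps)
  also have "\<dots> = \<bar>x (m + k) - y (m + k)\<bar>" using growth[of k] assms(1) by (simp add: abs_mult)
  finally show False using bounded[of "m + k"] by simp
qed

lemma qg_orbit_unit_interval:
  assumes "1 < \<beta>" "\<beta> < 2"
  shows "qg_orbit \<beta> 0 = 1" and "0 \<le> qg_orbit \<beta> m \<and> qg_orbit \<beta> m \<le> 1"
proof -
  obtain g :: "nat \<Rightarrow> real" where g: "g 0 = 1" "\<And>m. 0 \<le> g m \<and> g m \<le> 1"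
    "\<And>m. \<beta> * g m = quasi_greedy \<beta> (Suc m) + g (Suc m)"
    using quasi_greedy_has_unit_orbit[OF assms] by metis
  note Q = qg_orbit_step_and_bounds[OF assms(1) quasi_greedy_le_1[OF assms]]
  have "\<bar>qg_orbit \<beta> k - g k\<bar> \<le> \<beta> / (\<beta> - 1) + 1" for k
    using Q(2,3)[of k] g(2)[of k] by linarith
  then have "qg_orbit \<beta> k = g k" for k
    by (rule expanding_recursion_bounded_unique[where x = "qg_orbit \<beta>" and y = g
          and d = "\<lambda>m. quasi_greedy \<beta> (Suc m)", OF assms(1) Q(1) g(3)])
  then show "qg_orbit \<beta> 0 = 1" "0 \<le> qg_orbit \<beta> m \<and> qg_orbit \<beta> m \<le> 1"
    using g(1,2) by simp_all
qed

lemma recursion_lex_less: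
  fixes x y a b :: "nat \<Rightarrow> real"
  assumes "0 < \<beta>" "1 \<le> n"
    and x: "\<And>m. \<beta> * x m = a (Suc m) + x (Suc m)" and y: "\<And>m. \<beta> * y m = b (Suc m) + y (Suc m)"
    and agree: "\<And>j. 1 \<le> j \<Longrightarrow> j < n \<Longrightarrow> a j = b j"
    and differ: "b n + y n < a n + x n"
  shows "y 0 < x 0"
proof -
  have "y j < x j" if "j \<le> n - 1" for j
    using that
  proof (induction j rule: inc_induct)
    case base
    have "\<beta> * y (n - 1) < \<beta> * x (n - 1)"
      using x[of "n - 1"] y[of "n - 1"] differ \<open>1 \<le> n\<close> by simp
    then show ?case using \<open>0 < \<beta>\<close> by simp
  next
    case (step m)
    have "\<beta> * y m < \<beta> * x m"
      using x[of m] y[of m] agree[of "Suc m"] step by simp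
    then show ?case using \<open>0 < \<beta>\<close> by simp
  qed
  then show ?thesis by simp
qed

lemma orbit_positive_if_infinitely_many_nonzero_digits:
  fixes Q :: "nat \<Rightarrow> real" and e :: "nat \<Rightarrow> nat"
  assumes step: "\<And>m. \<beta> * Q m = e (Suc m) + Q (Suc m)" and nonneg: "\<And>m. 0 \<le> Q m"
    and infinite: "\<And>M. \<exists>m>M. e m \<noteq> 0"
  shows "0 < Q k"
proof (rule ccontr)
  assume "\<not> 0 < Q k"
  then have "Q k = 0" using nonneg[of k] by simp
  have zero: "Q (k + j) = 0" for j
  proof (induction j)
    case (Suc j)
    then have "real (e (Suc (k + j))) + Q (Suc (k + j)) = 0" using step[of "k + j"] by simp
    then show ?case using nonneg[of "Suc (k + j)"] by (simp add: add_nonneg_eq_0_iff)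
  qed (simp add: \<open>Q k = 0\<close>)
  obtain m where "k < m" "e m \<noteq> 0" using infinite by blast
  moreover have "real (e (Suc (k + j))) = 0" for j
    using step[of "k + j"] zero[of j] zero[of "Suc j"] by simp
  moreover have "Suc (k + (m - Suc k)) = m" using \<open>k < m\<close> by simp
  ultimately show False by (metis of_nat_eq_0_iff)
qed

lemma last_digit_one_before:
  fixes Q :: "nat \<Rightarrow> real" and e :: "nat \<Rightarrow> nat"
  assumes "1 < \<beta>" and step: "\<And>m. \<beta> * Q m = e (Suc m) + Q (Suc m)" and nonneg: "\<And>m. 0 \<le> Q m"
    and digits: "\<And>m. e m \<le> 1" and "e 1 = 1" and "1 \<le> k"
  shows "\<exists>p. 1 \<le> p \<and> p \<le> k \<and> e p = 1 \<and> Q p \<le> Q k"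
  using \<open>1 \<le> k\<close>
proof (induction k)
  case (Suc k)
  show ?case
  proof (cases "e (Suc k) = 1")
    case False
    then have "e (Suc k) = 0" "1 \<le> k"
      using digits[of "Suc k"] \<open>e 1 = 1\<close> by (auto, cases k) auto
    have "1 * Q k \<le> \<beta> * Q k" using nonneg[of k] \<open>1 < \<beta>\<close> by (intro mult_right_mono) auto
    then have "Q k \<le> Q (Suc k)" using step[of k] \<open>e (Suc k) = 0\<close> by simp
    then show ?thesis using Suc.IH \<open>1 \<le> k\<close> by (meson le_SucI order_trans)
  qed auto
qed simp

lemma reflected_orbit_bound:
  fixes Q :: "nat \<Rightarrow> real" and e :: "nat \<Rightarrow> nat"
  assumes "1 < \<beta>" "\<beta> < 2" and step: "\<And>m. \<beta> * Q m = e (Suc m) + Q (Suc m)"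
    and unit: "\<And>m. 0 \<le> Q m \<and> Q m \<le> 1" "Q 0 = 1" and digits: "\<And>m. e m \<le> 1"
    and lex: "lex_gt (\<lambda>j. 1 - e (k + j)) e"
  shows "Q k < 1 / (\<beta> - 1) - 1"
proof -
  obtain n where n: "1 \<le> n" "\<And>j. 1 \<le> j \<Longrightarrow> j < n \<Longrightarrow> 1 - e (k + j) = e j" "e n < 1 - e (k + n)"
    using lex unfolding lex_gt_def by blast
  define R where "R m = 1 / (\<beta> - 1) - Q (k + m)" for m
  have R_step: "\<beta> * R m = (1 - real (e (k + Suc m))) + R (Suc m)" for m
  proof -
    have "\<beta> * (1 / (\<beta> - 1)) = 1 + 1 / (\<beta> - 1)" using assms(1) by (simp add: field_simps)
    then show ?thesis using step[of "k + m"] by (simp add: R_def right_diff_distrib)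
  qed
  have "1 < 1 / (\<beta> - 1)" using assms(1,2) by (simp add: field_simps)
  then have "0 < R n" using unit(1)[of "k + n"] by (simp add: R_def)
  moreover have "e n = 0" "e (k + n) = 0" using n(3) by auto
  moreover have "1 - real (e (k + j)) = e j" if "1 \<le> j" "j < n" for j
    using n(2)[OF that] digits[of "k + j"] by (simp add: of_nat_diff)
  ultimately have "Q 0 < R 0"
    using recursion_lex_less[where a = "\<lambda>j. 1 - real (e (k + j))" and b = "\<lambda>j. real (e j)",
        OF _ n(1) R_step step] n(3) unit(1)[of n] assms(1) by simp
  then show ?thesis using unit(2) by (simp add: R_def)
qed

lemma orbit_enters_interval:
  fixes Q :: "nat \<Rightarrow> real" and e :: "nat \<Rightarrow> nat"
  assumes "1 < \<beta>" "1 < \<beta> * (\<beta> - 1)" and step: "\<And>m. \<beta> * Q m = e (Suc m) + Q (Suc m)"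
    and unit: "\<And>m. 0 \<le> Q m \<and> Q m \<le> 1" "Q 0 = 1" and digits: "\<And>m. e m \<le> 1"
    and infinite: "\<And>M. \<exists>m>M. e m \<noteq> 0"
    and "1 \<le> k" and small: "Q k < 1 / (\<beta> - 1) - 1"
  shows "\<exists>i\<ge>1. 1 / \<beta> < Q i \<and> Q i < 1 / (\<beta> * (\<beta> - 1))"
proof -
  have "\<beta> = e 1 + Q 1" using step[of 0] unit(2) by simp
  then have "e 1 \<noteq> 0" using unit(1)[of 1] assms(1) by auto
  then have "e 1 = 1" using digits[of 1] by simp
  have nonneg: "\<And>m. 0 \<le> Q m" using unit(1) by simp
  obtain p where p: "1 \<le> p" "e p = 1" "Q p \<le> Q k"
    using last_digit_one_before[OF assms(1) step nonneg digits \<open>e 1 = 1\<close> \<open>1 \<le> k\<close>] by blast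
  have p_step: "\<beta> * Q (p - 1) = 1 + Q p" using step[of "p - 1"] p by simp
  have "0 < Q p" by (rule orbit_positive_if_infinitely_many_nonzero_digits[OF step nonneg infinite])
  then have low: "1 / \<beta> < Q (p - 1)" using p_step assms(1) by (simp add: field_simps)
  have "\<beta> * Q (p - 1) < 1 / (\<beta> - 1)" using p_step p(3) small by simp
  then have high: "Q (p - 1) < 1 / (\<beta> * (\<beta> - 1))" using assms(1) by (simp add: field_simps)
  moreover have "1 / (\<beta> * (\<beta> - 1)) < 1" using assms(2) by simp
  ultimately have "p - 1 \<noteq> 0" using unit(2) by auto
  then show ?thesis using low high by (intro exI[of _ "p - 1"]) auto
qed

lemma above_golden_ratio:
  assumes "(1 + sqrt 5) / 2 < \<beta>"
  shows "1 < \<beta>" and "1 < \<beta> * (\<beta> - 1)"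
proof -
  have "1 < (1 + sqrt 5) / 2" by simp
  then show "1 < \<beta>" using assms by linarith
  have "sqrt 5 ^ 2 < (2 * \<beta> - 1) ^ 2" using assms by (intro power_strict_mono) auto
  then show "1 < \<beta> * (\<beta> - 1)" by (simp add: power2_eq_square algebra_simps)
qed

theorem lemma3p10:
  fixes \<beta> :: real and k0 :: nat
  assumes "(1 + sqrt 5) / 2 < \<beta>" and "\<beta> < 2"
    and "k0 \<ge> 1"
    and "lex_gt (\<lambda>j. 1 - quasi_greedy \<beta> (k0 + j)) (quasi_greedy \<beta>)"
  shows "\<exists>i\<ge>1. 1 / \<beta> < qg_orbit \<beta> i \<and> qg_orbit \<beta> i < 1 / (\<beta> * (\<beta> - 1))"
proof -
  note \<beta> = above_golden_ratio[OF assms(1)]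
  note digits = quasi_greedy_le_1[OF \<beta>(1) assms(2)]
  note step = qg_orbit_step_and_bounds(1)[OF \<beta>(1) digits]
  note unit = qg_orbit_unit_interval[OF \<beta>(1) assms(2)]
  have "qg_orbit \<beta> k0 < 1 / (\<beta> - 1) - 1"
    using reflected_orbit_bound[OF \<beta>(1) assms(2) step unit(2,1) digits assms(4)] .
  then show ?thesis
    using orbit_enters_interval[OF \<beta> step unit(2,1) digits
        quasi_greedy_infinitely_many_nonzero[OF \<beta>(1) assms(2)] assms(3)] by blast
qed

end
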